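(* Let $N\ge 2$ and let $\gamma_k$ ($k=1,\dots,N-1$) be as defined below. Then as $\lambda\to+\infty$, $$R_1=\sum_{k=1}^{N-1}\frac{k_{k+1}^2-k_k^2}{4\lambda^2}\Big(1+\mathcal{O}\big(\lambda^{-2}\big)\Big)\exp(-\gamma_k\lambda),$$ meaning that there are functions $\epsilon_k(\lambda)=\mathcal{O}(\lambda^{-2})$ as $\lambda\to+\infty$ such that $R_1=\sum_{k=1}^{N-1}\frac{k_{k+1}^2-k_k^2}{4\lambda^2}(1+\epsilon_k(\lambda))\exp(-\gamma_k\lambda)$ for all sufficiently large $\lambda$.
   Context: Fix real constants $\omega>0$, $\mu>0$, an integer $N\ge 2$, conductivities $\sigma_1,\dots,\sigma_N>0$ and thicknesses $h_1,\dots,h_{N-1}>0$. For $j=1,\dots,N$ let $k_j$ be a complex number with $k_j^2=-i\omega\mu\sigma_j$, and set $k_0:=0$. For real $\lambda>0$ define $u_0(\lambda)=\lambda$ and $u_j(\lambda)=\sqrt{\lambda^2-k_j^2}=\sqrt{\lambda^2+i\omega\mu\sigma_j}$ (principal square root), $j=1,\dots,N$. Define $\Psi_j=\dfrac{u_{j-1}-u_j}{u_{j-1}+u_j}$ for $j=1,\dots,N$, and the reflection terms recursively by $R_N=0$, $$R_j=\frac{R_{j+1}+\Psi_{j+1}}{R_{j+1}\Psi_{j+1}+1}\,e^{-2u_jh_j},\quad j=N-1,\dots,1,\qquad R_0=\frac{R_1+\Psi_1}{R_1\Psi_1+1}.$$ Put $c_i=2h_i\sqrt{1+i\omega\mu\sigma_i/\lambda^2}$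 (principal square root) for $i=1,\dots,N-1$, and $\gamma_k=\sum_{i=1}^k c_i$ for $k=1,\dots,N-1$. *)

theory Defs
  imports "HOL-Analysis.Analysis" "HOL-Library.Landau_Symbols"
begin

definition ksq :: "real \<Rightarrow> real \<Rightarrow> (nat \<Rightarrow> real) \<Rightarrow> nat \<Rightarrow> complex" where
  "ksq \<omega> \<mu> \<sigma> j = (if j = 0 then 0 else - \<i> * of_real (\<omega> * \<mu> * \<sigma> j))"

definition uu :: "real \<Rightarrow> real \<Rightarrow> (nat \<Rightarrow> real) \<Rightarrow> nat \<Rightarrow> real \<Rightarrow> complex" where
  "uu \<omega> \<mu> \<sigma> j lam = (if j = 0 then of_real lam
      else csqrt (of_real (lam^2) + \<i> * of_real (\<omega> * \<mu> * \<sigma> j)))"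

definition Psi :: "real \<Rightarrow> real \<Rightarrow> (nat \<Rightarrow> real) \<Rightarrow> nat \<Rightarrow> real \<Rightarrow> complex" where
  "Psi \<omega> \<mu> \<sigma> j lam =
     (uu \<omega> \<mu> \<sigma> (j - 1) lam - uu \<omega> \<mu> \<sigma> j lam) / (uu \<omega> \<mu> \<sigma> (j - 1) lam + uu \<omega> \<mu> \<sigma> j lam)"

text \<open>Rtail N m = R_{N-m}, computed by the backward recursion from R_N = 0
  (used for m <= N - 1, i.e. indices j = N, ..., 1).\<close>
fun Rtail :: "real \<Rightarrow> real \<Rightarrow> (nat \<Rightarrow> real) \<Rightarrow> (nat \<Rightarrow> real) \<Rightarrow> nat \<Rightarrow> nat \<Rightarrow> real \<Rightarrow> complex" where
  "Rtail \<omega> \<mu> \<sigma> h N 0 lam = 0"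
| "Rtail \<omega> \<mu> \<sigma> h N (Suc m) lam =
     (let r = Rtail \<omega> \<mu> \<sigma> h N m lam; p = Psi \<omega> \<mu> \<sigma> (N - m) lam; j = N - m - 1 in
      (r + p) / (r * p + 1) * exp (- 2 * uu \<omega> \<mu> \<sigma> j lam * of_real (h j)))"

definition Rref :: "real \<Rightarrow> real \<Rightarrow> (nat \<Rightarrow> real) \<Rightarrow> (nat \<Rightarrow> real) \<Rightarrow> nat \<Rightarrow> nat \<Rightarrow> real \<Rightarrow> complex" where
  "Rref \<omega> \<mu> \<sigma> h N j lam = Rtail \<omega> \<mu> \<sigma> h N (N - j) lam"

definition cc :: "real \<Rightarrow> real \<Rightarrow> (nat \<Rightarrow> real) \<Rightarrow> (nat \<Rightarrow> real) \<Rightarrow> nat \<Rightarrow> real \<Rightarrow> complex" where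
  "cc \<omega> \<mu> \<sigma> h i lam = 2 * of_real (h i) * csqrt (1 + \<i> * of_real (\<omega> * \<mu> * \<sigma> i / lam^2))"

definition gam :: "real \<Rightarrow> real \<Rightarrow> (nat \<Rightarrow> real) \<Rightarrow> (nat \<Rightarrow> real) \<Rightarrow> nat \<Rightarrow> real \<Rightarrow> complex" where
  "gam \<omega> \<mu> \<sigma> h k lam = (\<Sum>i=1..k. cc \<omega> \<mu> \<sigma> h i lam)"

end

theory Submission
  imports Defs "HOL-Real_Asymp.Real_Asymp"
begin

text \<open>The identity \<open>(r + \<Psi>) / (r \<Psi> + 1) = \<Psi> + r T\<close>, \<open>T = (1 - \<Psi>^2) / (r \<Psi> + 1)\<close>,
  makes the backward recursion linear in \<open>R_(j+1)\<close>, so it unfolds to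
  \<open>R_1 = \<Sum>_k \<Psi>_(k+1) \<Prod>_(i\<le>k) exp (-2 u_i h_i) \<Prod>_(i<k) T_i\<close>.
  The exponential product is exactly \<open>exp (-\<gamma>_k \<lambda>)\<close> because
  \<open>u_i = \<lambda> sqrt (1 + i \<omega> \<mu> \<sigma>_i / \<lambda>^2)\<close>. Since \<open>u_k^2 - u_(k+1)^2 = k_(k+1)^2 - k_k^2\<close>,
  \<open>\<Psi>_(k+1) = (k_(k+1)^2 - k_k^2) / (u_k + u_(k+1))^2\<close>, and \<open>|u_j - \<lambda>| \<le> \<omega> \<mu> \<sigma>_j / (2 \<lambda>)\<close>
  gives \<open>(u_k + u_(k+1))^2 = 4 \<lambda>^2 (1 + O(\<lambda>^-2))\<close>. Finally, for large \<open>\<lambda>\<close> all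
  \<open>|\<Psi>_(k+1)| \<le> 1/2\<close> and \<open>|exp (-2 u_k h_k)| \<le> 1/3\<close>; then the recursion keeps \<open>|R_j| \<le> 1\<close>,
  so \<open>T_i = 1 + O(\<Psi>_(i+1)) = 1 + O(\<lambda>^-2)\<close>.\<close>

lemma csqrt_shift_Re_ge:
  fixes lam a :: real
  assumes "lam \<ge> 0"
  shows "Re (csqrt (of_real (lam^2) + \<i> * of_real a)) \<ge> lam"
proof -
  define u where "u = csqrt (of_real (lam^2) + \<i> * of_real a)"
  have "Re (u^2) = lam^2" unfolding u_def by simp
  then have "(Re u)^2 = lam^2 + (Im u)^2" by (simp add: power2_eq_square)
  then have "lam^2 \<le> (Re u)^2" by simp
  with Re_csqrt show ?thesis unfolding u_def using power2_le_imp_le by blast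
qed

lemma norm_csqrt_shift_minus_le:
  fixes lam a :: real
  assumes lam: "lam > 0" and a: "a \<ge> 0"
  shows "norm (csqrt (of_real (lam^2) + \<i> * of_real a) - of_real lam) \<le> a / (2 * lam)"
proof -
  let ?u = "csqrt (of_real (lam^2) + \<i> * of_real a)"
  have "(?u - of_real lam) * (?u + of_real lam) = \<i> * of_real a"
    by (simp add: algebra_simps power2_eq_square[symmetric])
  then have prod: "norm (?u - of_real lam) * norm (?u + of_real lam) = a"
    using a by (metis norm_mult norm_ii mult_1 norm_of_real abs_of_nonneg)
  have "2 * lam \<le> Re (?u + of_real lam)"
    using csqrt_shift_Re_ge[of lam a] lam by simp
  also have "\<dots> \<le> norm (?u + of_real lam)" by (rule complex_Re_le_cmod)
  finally have "2 * lam \<le> norm (?u + of_real lam)" .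
  with prod lam show ?thesis
    by (simp add: le_divide_eq) (metis mult_left_mono norm_ge_zero)
qed

lemma csqrt_shift_scale:
  fixes lam a :: real
  assumes lam: "lam > 0"
  shows "csqrt (of_real (lam^2) + \<i> * of_real a) = of_real lam * csqrt (1 + \<i> * of_real (a / lam^2))"
proof (rule csqrt_unique)
  have "(of_real lam * csqrt (1 + \<i> * of_real (a / lam^2)))^2 =
        of_real (lam^2) + \<i> * of_real (lam^2 * (a / lam^2))"
    by (simp add: power_mult_distrib algebra_simps)
  then show "(of_real lam * csqrt (1 + \<i> * of_real (a / lam^2)))^2 = of_real (lam^2) + \<i> * of_real a"
    using lam by simp
  show "0 < Re (of_real lam * csqrt (1 + \<i> * of_real (a / lam^2))) \<or>
    Re (of_real lam * csqrt (1 + \<i> * of_real (a / lam^2))) = 0 \<and>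
    0 \<le> Im (of_real lam * csqrt (1 + \<i> * of_real (a / lam^2)))"
    using csqrt_principal[of "1 + \<i> * of_real (a / lam^2)"] lam by auto
qed

lemma norm_four_sq_div_minus_one_le:
  fixes lam d :: real and s :: complex
  assumes lam: "lam > 0" and s: "norm s \<ge> 2 * lam" and d: "norm (2 * of_real lam - s) \<le> d"
  shows "norm (4 * of_real (lam^2) / s^2 - 1) \<le> d / lam"
proof -
  have s0: "s \<noteq> 0" using s lam by auto
  have "4 * of_real (lam^2) / s^2 - 1 = (2 * of_real lam - s) * (2 * of_real lam + s) / s^2"
    using s0 by (simp add: field_simps power2_eq_square)
  then have "norm (4 * of_real (lam^2) / s^2 - 1) =
      norm (2 * of_real lam - s) * (norm (2 * of_real lam + s) / norm s) / norm s"
    by (simp add: norm_mult norm_divide norm_power power2_eq_square)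
  also have "\<dots> \<le> d * 2 / (2 * lam)"
  proof -
    have "norm (2 * of_real lam + s) \<le> 2 * lam + norm s"
      using norm_triangle_ineq[of "2 * of_real lam" s] lam by (simp add: norm_mult)
    then have "norm (2 * of_real lam + s) / norm s \<le> 2"
      using s lam by (simp add: divide_le_eq)
    moreover have "0 \<le> d" using d norm_ge_zero order_trans by blast
    ultimately have "norm (2 * of_real lam - s) * (norm (2 * of_real lam + s) / norm s) \<le> d * 2"
      using d by (intro mult_mono) auto
    moreover have "0 \<le> d" using d norm_ge_zero order_trans by blast
    ultimately show ?thesis
      using s lam by (meson frac_le mult_nonneg_nonneg norm_ge_zero zero_le_numeral mult_pos_pos zero_less_numeral)
  qed
  also have "\<dots> = d / lam" using lam by simp
  finally show ?thesis .
qed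

definition decays_sq :: "(real \<Rightarrow> 'a::real_normed_algebra_1) \<Rightarrow> bool" where
  "decays_sq f \<longleftrightarrow> (\<exists>C. \<forall>\<^sub>F x in at_top. norm (f x) \<le> C / x^2)"

lemma decays_sqI: "(\<forall>\<^sub>F x in at_top. norm (f x) \<le> C / x^2) \<Longrightarrow> decays_sq f"
  unfolding decays_sq_def by blast

lemma decays_sq_cong:
  assumes "\<forall>\<^sub>F x in at_top. f x = g x" "decays_sq g"
  shows "decays_sq f"
proof -
  obtain C where "\<forall>\<^sub>F x in at_top. norm (g x) \<le> C / x^2"
    using assms(2) unfolding decays_sq_def by blast
  with assms(1) have "\<forall>\<^sub>F x in at_top. norm (f x) \<le> C / x^2"
    by eventually_elim simp
  then show ?thesis by (rule decays_sqI)
qed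

lemma decays_sq_add:
  assumes "decays_sq f" "decays_sq g"
  shows "decays_sq (\<lambda>x. f x + g x)"
proof -
  obtain C D where "\<forall>\<^sub>F x in at_top. norm (f x) \<le> C / x^2"
    and "\<forall>\<^sub>F x in at_top. norm (g x) \<le> D / x^2"
    using assms unfolding decays_sq_def by blast
  then have "\<forall>\<^sub>F x in at_top. norm (f x + g x) \<le> (C + D) / x^2"
  proof eventually_elim
    case (elim x)
    have "norm (f x + g x) \<le> norm (f x) + norm (g x)" by (rule norm_triangle_ineq)
    also have "\<dots> \<le> C / x^2 + D / x^2" using elim by (rule add_mono)
    finally show ?case by (simp add: add_divide_distrib)
  qed
  then show ?thesis by (rule decays_sqI)
qed

lemma decays_sq_mult:
  assumes "decays_sq f" "decays_sq g"
  shows "decays_sq (\<lambda>x. f x * g x)"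
proof -
  obtain C D where "\<forall>\<^sub>F x in at_top. norm (f x) \<le> C / x^2"
    and "\<forall>\<^sub>F x in at_top. norm (g x) \<le> D / x^2"
    using assms unfolding decays_sq_def by blast
  then have "\<forall>\<^sub>F x in at_top. norm (f x * g x) \<le> (C * D) / x^2"
    using eventually_ge_at_top[of "1::real"]
  proof eventually_elim
    case (elim x)
    have x2: "x^2 \<ge> 1" using elim(3) by (simp add: one_le_power)
    have C: "C / x^2 \<ge> 0" using elim(1) norm_ge_zero order_trans by blast
    have "D / x^2 \<ge> 0" using elim(2) norm_ge_zero order_trans by blast
    then have "D \<ge> 0" using elim(3) by (simp add: zero_le_divide_iff)
    then have D: "D \<ge> 0" "D / x^2 \<le> D" using x2 by (simp_all add: divide_le_eq mult_le_cancel_left1)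
    have "norm (f x * g x) \<le> norm (f x) * norm (g x)" by (rule norm_mult_ineq)
    also have "\<dots> \<le> (C / x^2) * (D / x^2)"
      using elim C by (intro mult_mono) auto
    also have "\<dots> \<le> (C / x^2) * D"
      using C D by (intro mult_left_mono)
    finally show ?case by simp
  qed
  then show ?thesis by (rule decays_sqI)
qed

lemma decays_sq_mult_near_one:
  assumes "decays_sq (\<lambda>x. f x - 1)" "decays_sq (\<lambda>x. g x - 1)"
  shows "decays_sq (\<lambda>x. f x * g x - 1)"
proof -
  have "decays_sq (\<lambda>x. (f x - 1) * (g x - 1) + ((f x - 1) + (g x - 1)))"
    using assms by (intro decays_sq_add decays_sq_mult)
  then show ?thesis by (rule decays_sq_cong[rotated]) (simp add: algebra_simps)
qed

lemma decays_sq_prod_near_one: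
  assumes "finite A" "\<And>i. i \<in> A \<Longrightarrow> decays_sq (\<lambda>x. f i x - 1)"
  shows "decays_sq (\<lambda>x. (\<Prod>i\<in>A. f i x) - 1)"
  using assms
proof (induction A rule: finite_induct)
  case empty
  show ?case by (rule decays_sqI[of _ 0]) simp
next
  case (insert a A)
  then have "decays_sq (\<lambda>x. f a x * (\<Prod>i\<in>A. f i x) - 1)"
    by (intro decays_sq_mult_near_one) auto
  with insert show ?case by simp
qed

lemma decays_sq_imp_bigo:
  assumes "decays_sq f"
  shows "(\<lambda>x. norm (f x)) \<in> O[at_top](\<lambda>x. 1 / x^2)"
proof -
  obtain C where "\<forall>\<^sub>F x in at_top. norm (f x) \<le> C / x^2"
    using assms unfolding decays_sq_def by blast
  then have "\<forall>\<^sub>F x in at_top. norm (norm (f x)) \<le> C * norm (1 / x^2)"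
    by eventually_elim (simp add: divide_inverse)
  then show ?thesis by (rule bigoI)
qed

lemma linear_recurrence_unfold:
  fixes R P E D :: "nat \<Rightarrow> 'a::comm_ring_1"
  assumes "R N = 0"
    and rec: "\<And>j. 1 \<le> j \<Longrightarrow> j < N \<Longrightarrow> R j = (P (Suc j) + R (Suc j) * D j) * E j"
    and "j \<le> N" "1 \<le> j"
  shows "R j = (\<Sum>k=j..N-1. P (Suc k) * (\<Prod>i=j..k. E i) * (\<Prod>i=j..<k. D i))"
  using assms(3,4)
proof (induction "N - j" arbitrary: j)
  case 0
  then show ?case using \<open>R N = 0\<close> by simp
next
  case (Suc d)
  then have jN: "j < N" by simp
  have shift: "(\<Sum>k=Suc j..N-1. P (Suc k) * (\<Prod>i=j..k. E i) * (\<Prod>i=j..<k. D i)) =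
      D j * E j * (\<Sum>k=Suc j..N-1. P (Suc k) * (\<Prod>i=Suc j..k. E i) * (\<Prod>i=Suc j..<k. D i))"
    unfolding sum_distrib_left
  proof (rule sum.cong)
    fix k assume "k \<in> {Suc j..N-1}"
    then show "P (Suc k) * (\<Prod>i=j..k. E i) * (\<Prod>i=j..<k. D i) =
        D j * E j * (P (Suc k) * (\<Prod>i=Suc j..k. E i) * (\<Prod>i=Suc j..<k. D i))"
      by (simp add: prod.atLeast_Suc_atMost prod.atLeast_Suc_lessThan)
  qed simp
  have IH: "R (Suc j) = (\<Sum>k=Suc j..N-1. P (Suc k) * (\<Prod>i=Suc j..k. E i) * (\<Prod>i=Suc j..<k. D i))"
    using Suc jN by (intro Suc.hyps) auto
  have "(\<Sum>k=j..N-1. P (Suc k) * (\<Prod>i=j..k. E i) * (\<Prod>i=j..<k. D i)) =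
      P (Suc j) * E j + (\<Sum>k=Suc j..N-1. P (Suc k) * (\<Prod>i=j..k. E i) * (\<Prod>i=j..<k. D i))"
    using jN by (subst sum.atLeast_Suc_atMost) auto
  also have "\<dots> = (P (Suc j) + R (Suc j) * D j) * E j"
    unfolding shift IH by (simp add: algebra_simps)
  also have "\<dots> = R j"
    using rec[OF Suc.prems(2) jN] by simp
  finally show ?case by simp
qed

lemma norm_mult_add_one_ge:
  fixes r p :: complex
  assumes "norm r \<le> 1" "norm p \<le> 1/2"
  shows "norm (r * p + 1) \<ge> 1/2"
proof -
  have "norm (r * p) \<le> 1/2"
    using mult_mono[OF assms] by (simp add: norm_mult)
  moreover have "1 \<le> norm (r * p + 1) + norm (r * p)"
    using norm_triangle_ineq4[of "r * p + 1" "r * p"] by simp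
  ultimately show ?thesis by linarith
qed

lemma reflection_step_split:
  fixes r p :: complex
  assumes "r * p + 1 \<noteq> 0"
  shows "(r + p) / (r * p + 1) = p + r * ((1 - p^2) / (r * p + 1))"
  using assms by (simp add: field_simps power2_eq_square)

lemma norm_reflection_step_le:
  fixes r p e :: complex
  assumes "norm r \<le> 1" "norm p \<le> 1/2" "norm e \<le> 1/3"
  shows "norm ((r + p) / (r * p + 1) * e) \<le> 1"
proof -
  have "norm ((r + p) / (r * p + 1)) \<le> (3/2) / (1/2)"
    unfolding norm_divide using norm_mult_add_one_ge[OF assms(1,2)] assms norm_triangle_ineq[of r p]
    by (intro frac_le) auto
  then have "norm ((r + p) / (r * p + 1)) * norm e \<le> 3 * (1/3)"
    using assms(3) by (intro mult_mono) auto
  then show ?thesis by (simp only: norm_mult)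
qed

lemma norm_transmission_factor_minus_one_le:
  fixes r p :: complex
  assumes "norm r \<le> 1" "norm p \<le> 1/2"
  shows "norm ((1 - p^2) / (r * p + 1) - 1) \<le> 3 * norm p"
proof -
  have den: "norm (r * p + 1) \<ge> 1/2" by (rule norm_mult_add_one_ge[OF assms])
  then have "r * p + 1 \<noteq> 0" by auto
  then have "(1 - p^2) / (r * p + 1) - 1 = - (p^2 + r * p) / (r * p + 1)"
    by (simp add: field_simps)
  then have "norm ((1 - p^2) / (r * p + 1) - 1) = norm (p^2 + r * p) / norm (r * p + 1)"
    by (simp only: norm_divide norm_minus_cancel)
  also have "\<dots> \<le> (3/2 * norm p) / (1/2)"
  proof (rule frac_le)
    have "norm (p^2 + r * p) \<le> norm p * norm p + norm r * norm p"
      using norm_triangle_ineq[of "p^2" "r * p"] by (simp add: norm_mult norm_power power2_eq_square)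
    also have "\<dots> \<le> 1/2 * norm p + 1 * norm p"
      using assms by (intro add_mono mult_right_mono) auto
    finally show "norm (p^2 + r * p) \<le> 3/2 * norm p" by simp
  qed (use den in auto)
  finally show ?thesis by simp
qed

locale layered_medium =
  fixes \<omega> \<mu> :: real and \<sigma> h :: "nat \<Rightarrow> real" and N :: nat
  assumes omega_pos: "\<omega> > 0" and mu_pos: "\<mu> > 0" and N_ge_2: "N \<ge> 2"
    and sigma_pos: "\<And>j. 1 \<le> j \<Longrightarrow> j \<le> N \<Longrightarrow> \<sigma> j > 0"
    and h_pos: "\<And>i. 1 \<le> i \<Longrightarrow> i \<le> N - 1 \<Longrightarrow> h i > 0"
begin

abbreviation u where "u \<equiv> uu \<omega> \<mu> \<sigma>"
abbreviation \<Psi> where "\<Psi> \<equiv> Psi \<omega> \<mu> \<sigma>"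
abbreviation R where "R \<equiv> Rref \<omega> \<mu> \<sigma> h N"
abbreviation ksq_diff where "ksq_diff k \<equiv> ksq \<omega> \<mu> \<sigma> (k + 1) - ksq \<omega> \<mu> \<sigma> k"

definition a :: "nat \<Rightarrow> real" where
  "a j = \<omega> * \<mu> * \<sigma> j"

definition E :: "nat \<Rightarrow> real \<Rightarrow> complex" where
  "E j lam = exp (- 2 * u j lam * of_real (h j))"

definition T :: "nat \<Rightarrow> real \<Rightarrow> complex" where
  "T j lam = (1 - (\<Psi> (Suc j) lam)^2) / (R (Suc j) lam * \<Psi> (Suc j) lam + 1)"

definition \<epsilon> :: "nat \<Rightarrow> real \<Rightarrow> complex" where
  "\<epsilon> k lam = 4 * of_real (lam^2) / (u k lam + u (Suc k) lam)^2 * (\<Prod>i=1..<k. T i lam) - 1"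

definition regime :: "real \<Rightarrow> bool" where
  "regime lam \<longleftrightarrow> lam > 0 \<and> (\<forall>k\<in>{1..N-1}. norm (\<Psi> (Suc k) lam) \<le> 1/2 \<and> norm (E k lam) \<le> 1/3)"

lemma a_nonneg: "1 \<le> j \<Longrightarrow> j \<le> N \<Longrightarrow> a j \<ge> 0"
  unfolding a_def using omega_pos mu_pos sigma_pos by (simp add: less_imp_le)

lemma u_eq: "1 \<le> j \<Longrightarrow> u j lam = csqrt (of_real (lam^2) + \<i> * of_real (a j))"
  unfolding uu_def a_def by simp

lemma u_sq: "1 \<le> j \<Longrightarrow> (u j lam)^2 = of_real (lam^2) + \<i> * of_real (a j)"
  unfolding u_eq by simp

lemma Re_u_ge: "1 \<le> j \<Longrightarrow> lam \<ge> 0 \<Longrightarrow> Re (u j lam) \<ge> lam"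
  unfolding u_eq by (rule csqrt_shift_Re_ge)

lemma norm_u_add_ge:
  assumes "1 \<le> k" "lam \<ge> 0"
  shows "norm (u k lam + u (Suc k) lam) \<ge> 2 * lam"
proof -
  have "2 * lam \<le> Re (u k lam + u (Suc k) lam)"
    using Re_u_ge[of k lam] Re_u_ge[of "Suc k" lam] assms by simp
  also have "\<dots> \<le> norm (u k lam + u (Suc k) lam)" by (rule complex_Re_le_cmod)
  finally show ?thesis .
qed

lemma u_add_neq_0: "1 \<le> k \<Longrightarrow> lam > 0 \<Longrightarrow> u k lam + u (Suc k) lam \<noteq> 0"
  using norm_u_add_ge[of k lam] by auto

lemma Psi_Suc_eq:
  assumes "1 \<le> k" "lam > 0"
  shows "\<Psi> (Suc k) lam = ksq_diff k / (u k lam + u (Suc k) lam)^2"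
proof -
  have "ksq_diff k = (u k lam)^2 - (u (Suc k) lam)^2"
    using assms unfolding ksq_def by (simp add: u_sq a_def)
  also have "\<dots> = (u k lam - u (Suc k) lam) * (u k lam + u (Suc k) lam)"
    by (simp add: algebra_simps power2_eq_square)
  finally have "ksq_diff k = (u k lam - u (Suc k) lam) * (u k lam + u (Suc k) lam)" .
  then show ?thesis
    unfolding Psi_def using u_add_neq_0[OF assms] by (simp add: power2_eq_square)
qed

lemma norm_Psi_Suc_le:
  assumes "1 \<le> k" "lam > 0"
  shows "norm (\<Psi> (Suc k) lam) \<le> norm (ksq_diff k) / (4 * lam^2)"
proof -
  have "(2 * lam)^2 \<le> norm (u k lam + u (Suc k) lam)^2"
    using norm_u_add_ge[of k lam] assms by (intro power_mono) auto
  moreover have "norm (u k lam + u (Suc k) lam) > 0"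
    using u_add_neq_0[OF assms] by simp
  ultimately show ?thesis
    unfolding Psi_Suc_eq[OF assms] norm_divide norm_power using assms
    by (intro divide_left_mono) (auto simp: power_mult_distrib)
qed

lemma norm_sq_ratio_minus_one_le:
  assumes "k \<in> {1..N-1}" "lam > 0"
  shows "norm (4 * of_real (lam^2) / (u k lam + u (Suc k) lam)^2 - 1) \<le> (a k + a (Suc k)) / (2 * lam^2)"
proof -
  have k: "1 \<le> k" "a k \<ge> 0" "a (Suc k) \<ge> 0" using assms a_nonneg by auto
  have "2 * of_real lam - (u k lam + u (Suc k) lam) = (of_real lam - u k lam) + (of_real lam - u (Suc k) lam)"
    by simp
  then have "norm (2 * of_real lam - (u k lam + u (Suc k) lam))
      \<le> norm (u k lam - of_real lam) + norm (u (Suc k) lam - of_real lam)"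
    using norm_triangle_ineq by (metis norm_minus_commute)
  also have "\<dots> \<le> a k / (2 * lam) + a (Suc k) / (2 * lam)"
    using k assms norm_csqrt_shift_minus_le by (intro add_mono) (simp_all add: u_eq)
  finally have "norm (2 * of_real lam - (u k lam + u (Suc k) lam)) \<le> (a k + a (Suc k)) / (2 * lam)"
    by (simp add: add_divide_distrib)
  from norm_four_sq_div_minus_one_le[OF assms(2) norm_u_add_ge this] k assms
  show ?thesis by (simp add: power2_eq_square)
qed

lemma norm_E_le:
  assumes "k \<in> {1..N-1}" "lam \<ge> 0"
  shows "norm (E k lam) \<le> exp (- 2 * h k * lam)"
proof -
  have "h k * lam \<le> h k * Re (u k lam)"
    using assms Re_u_ge[of k lam] h_pos[of k] by (intro mult_left_mono) auto
  then show ?thesis unfolding E_def norm_exp_eq_Re by (simp add: mult.commute)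
qed

lemma Psi_Suc_tendsto_0:
  assumes "1 \<le> k"
  shows "((\<lambda>lam. \<Psi> (Suc k) lam) \<longlongrightarrow> 0) at_top"
proof (rule Lim_null_comparison)
  show "\<forall>\<^sub>F lam in at_top. norm (\<Psi> (Suc k) lam) \<le> norm (ksq_diff k) / (4 * lam^2)"
    using eventually_gt_at_top[of 0] by eventually_elim (rule norm_Psi_Suc_le[OF assms])
  have "((\<lambda>lam. c / (4 * lam^2)) \<longlongrightarrow> 0) at_top" for c :: real by real_asymp
  then show "((\<lambda>lam. norm (ksq_diff k) / (4 * lam^2)) \<longlongrightarrow> 0) at_top" .
qed

lemma E_tendsto_0:
  assumes "k \<in> {1..N-1}"
  shows "(E k \<longlongrightarrow> 0) at_top"
proof (rule Lim_null_comparison)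
  show "\<forall>\<^sub>F lam in at_top. norm (E k lam) \<le> exp (- 2 * h k * lam)"
    using eventually_ge_at_top[of 0] by eventually_elim (rule norm_E_le[OF assms])
  have "h k > 0" using assms h_pos by auto
  then show "((\<lambda>lam. exp (- 2 * h k * lam)) \<longlongrightarrow> 0) at_top" by real_asymp
qed

lemma eventually_regime: "eventually regime at_top"
proof -
  have "\<forall>\<^sub>F lam in at_top. norm (\<Psi> (Suc k) lam) < 1/2 \<and> norm (E k lam) < 1/3"
    if "k \<in> {1..N-1}" for k
    using tendstoD[OF Psi_Suc_tendsto_0, of k "1/2"] tendstoD[OF E_tendsto_0, of k "1/3"] that
    by (auto simp: eventually_conj)
  then have "\<forall>\<^sub>F lam in at_top. \<forall>k\<in>{1..N-1}. norm (\<Psi> (Suc k) lam) < 1/2 \<and> norm (E k lam) < 1/3"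
    by (intro eventually_ball_finite) auto
  with eventually_gt_at_top[of 0] show ?thesis
    unfolding regime_def by eventually_elim (auto simp: less_imp_le)
qed

lemma Rref_N: "R N lam = 0"
  unfolding Rref_def by simp

lemma Rref_step:
  assumes "1 \<le> j" "j < N"
  shows "R j lam = (R (Suc j) lam + \<Psi> (Suc j) lam) / (R (Suc j) lam * \<Psi> (Suc j) lam + 1) * E j lam"
proof -
  have "N - j = Suc (N - Suc j)" "N - (N - Suc j) = Suc j" using assms by simp_all
  then show ?thesis unfolding Rref_def E_def by (simp add: Let_def)
qed

lemma norm_Rref_le_1:
  assumes "regime lam" "1 \<le> j" "j \<le> N"
  shows "norm (R j lam) \<le> 1"
  using assms(2,3)
proof (induction "N - j" arbitrary: j)
  case 0
  then have "j = N" by simp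
  then show ?case by (simp only: Rref_N) simp
next
  case (Suc d)
  then have "j < N" by simp
  moreover have "norm (R (Suc j) lam) \<le> 1" using Suc calculation by (intro Suc.hyps) auto
  ultimately show ?case
    using Suc.prems assms(1) unfolding Rref_step[OF Suc.prems(1) \<open>j < N\<close>] regime_def
    by (intro norm_reflection_step_le) auto
qed

lemma norm_T_minus_1_le:
  assumes "regime lam" "i \<in> {1..N-1}"
  shows "norm (T i lam - 1) \<le> 3 * norm (\<Psi> (Suc i) lam)"
  unfolding T_def using assms norm_Rref_le_1[OF assms(1), of "Suc i"]
  by (intro norm_transmission_factor_minus_one_le) (auto simp: regime_def)

lemma Rref_linear_step:
  assumes "regime lam" "1 \<le> j" "j < N"
  shows "R j lam = (\<Psi> (Suc j) lam + R (Suc j) lam * T j lam) * E j lam"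
proof -
  have "norm (R (Suc j) lam) \<le> 1" "norm (\<Psi> (Suc j) lam) \<le> 1/2"
    using assms norm_Rref_le_1[OF assms(1), of "Suc j"] by (auto simp: regime_def)
  from norm_mult_add_one_ge[OF this] have "R (Suc j) lam * \<Psi> (Suc j) lam + 1 \<noteq> 0"
    by auto
  then show ?thesis
    unfolding Rref_step[OF assms(2,3)] T_def by (simp add: reflection_step_split)
qed

lemma Rref_1_expansion:
  assumes "regime lam"
  shows "R 1 lam = (\<Sum>k=1..N-1. \<Psi> (Suc k) lam * (\<Prod>i=1..k. E i lam) * (\<Prod>i=1..<k. T i lam))"
  using N_ge_2 Rref_N Rref_linear_step[OF assms]
  by (intro linear_recurrence_unfold[where R="\<lambda>j. R j lam"]) auto

lemma prod_E_eq_exp_gam: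
  assumes "lam > 0"
  shows "(\<Prod>i=1..k. E i lam) = exp (- gam \<omega> \<mu> \<sigma> h k lam * of_real lam)"
proof -
  have "E i lam = exp (- (cc \<omega> \<mu> \<sigma> h i lam * of_real lam))" if "i \<in> {1..k}" for i
    using that csqrt_shift_scale[OF assms, of "a i"]
    unfolding E_def cc_def by (simp add: u_eq a_def algebra_simps)
  then have "(\<Prod>i=1..k. E i lam) = exp (\<Sum>i=1..k. - (cc \<omega> \<mu> \<sigma> h i lam * of_real lam))"
    by (simp add: exp_sum)
  then show ?thesis
    unfolding gam_def by (simp add: sum_distrib_right sum_negf)
qed

lemma Rref_1_eq:
  assumes "regime lam"
  shows "R 1 lam = (\<Sum>k=1..N-1. ksq_diff k / (4 * of_real (lam^2))
           * (1 + \<epsilon> k lam) * exp (- gam \<omega> \<mu> \<sigma> h k lam * of_real lam))"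
proof -
  have lam: "lam > 0" using assms by (simp add: regime_def)
  then have "(of_real lam :: complex) \<noteq> 0" by simp
  then have "\<Psi> (Suc k) lam * (\<Prod>i=1..k. E i lam) * (\<Prod>i=1..<k. T i lam) =
      ksq_diff k / (4 * of_real (lam^2)) * (1 + \<epsilon> k lam) * exp (- gam \<omega> \<mu> \<sigma> h k lam * of_real lam)"
    if "k \<in> {1..N-1}" for k
    using that lam unfolding prod_E_eq_exp_gam[OF lam, symmetric] \<epsilon>_def
    by (simp add: Psi_Suc_eq u_add_neq_0 field_simps)
  then show ?thesis
    unfolding Rref_1_expansion[OF assms] by (rule sum.cong[OF refl])
qed

lemma \<epsilon>_decays_sq:
  assumes "k \<in> {1..N-1}"
  shows "decays_sq (\<epsilon> k)"
proof -
  have "decays_sq (\<lambda>lam. 4 * of_real (lam^2) / (u k lam + u (Suc k) lam)^2 - 1)"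
    using eventually_gt_at_top[of 0]
    by (intro decays_sqI[of _ "(a k + a (Suc k)) / 2"], eventually_elim)
      (use norm_sq_ratio_minus_one_le[OF assms] in simp)
  moreover have "decays_sq (\<lambda>lam. T i lam - 1)" if "i \<in> {1..<k}" for i
  proof (rule decays_sqI[of _ "3 * norm (ksq_diff i) / 4"])
    have i: "i \<in> {1..N-1}" using that assms by auto
    show "\<forall>\<^sub>F lam in at_top. norm (T i lam - 1) \<le> 3 * norm (ksq_diff i) / 4 / lam^2"
      using eventually_regime
    proof eventually_elim
      case (elim lam)
      then have "lam > 0" by (simp add: regime_def)
      then show ?case
        using norm_T_minus_1_le[OF elim i] norm_Psi_Suc_le[of i lam] i by simp
    qed
  qed
  then have "decays_sq (\<lambda>lam. (\<Prod>i=1..<k. T i lam) - 1)"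
    by (intro decays_sq_prod_near_one) auto
  ultimately show ?thesis
    unfolding \<epsilon>_def by (rule decays_sq_mult_near_one)
qed

end

theorem lemma3:
  fixes \<omega> \<mu> :: real and N :: nat and \<sigma> h :: "nat \<Rightarrow> real"
  assumes "\<omega> > 0" "\<mu> > 0" "N \<ge> 2"
    and "\<And>j. 1 \<le> j \<Longrightarrow> j \<le> N \<Longrightarrow> \<sigma> j > 0"
    and "\<And>i. 1 \<le> i \<Longrightarrow> i \<le> N - 1 \<Longrightarrow> h i > 0"
  shows "\<exists>\<epsilon> :: nat \<Rightarrow> real \<Rightarrow> complex.
     (\<forall>k\<in>{1..N-1}. (\<lambda>x. norm (\<epsilon> k x)) \<in> O[at_top](\<lambda>x. 1 / x^2)) \<and>
     (\<forall>\<^sub>F lam in at_top.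
        Rref \<omega> \<mu> \<sigma> h N 1 lam =
        (\<Sum>k=1..N-1. (ksq \<omega> \<mu> \<sigma> (k+1) - ksq \<omega> \<mu> \<sigma> k) / (4 * of_real (lam^2))
           * (1 + \<epsilon> k lam) * exp (- gam \<omega> \<mu> \<sigma> h k lam * of_real lam)))"
proof -
  interpret layered_medium \<omega> \<mu> \<sigma> h N
    using assms by unfold_locales auto
  show ?thesis
  proof (intro exI conjI ballI)
    show "(\<lambda>x. norm (\<epsilon> k x)) \<in> O[at_top](\<lambda>x. 1 / x^2)" if "k \<in> {1..N-1}" for k
      using that by (intro decays_sq_imp_bigo \<epsilon>_decays_sq)
    show "\<forall>\<^sub>F lam in at_top. R 1 lam = (\<Sum>k=1..N-1. ksq_diff k / (4 * of_real (lam^2))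
           * (1 + \<epsilon> k lam) * exp (- gam \<omega> \<mu> \<sigma> h k lam * of_real lam))"
      using eventually_regime by eventually_elim (rule Rref_1_eq)
  qed
qed

end
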